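(* Let $2\le k\le d+1$ and let $\mathcal{Q}=\{Q_1,\dots,Q_k\}$ be a collection of cubes in $\mathbb{R}^d$ that is transversal. Then each $Q_l$ can be partitioned into finitely many (a number bounded independently of anything but the collection) sub-cubes $Q_l=\bigcup_i Q_{l,i}$ such that every collection $\widetilde{\mathcal{Q}}=\{\widetilde Q_1,\dots,\widetilde Q_k\}$ with $\widetilde Q_l\in\{Q_{l,i}\}_i$ for each $l$ is weakly transversal.
   Context: "Cube" means any rectangular box in $\mathbb{R}^d$ (sides need not be equal). A collection of cubes $Q_1,\dots,Q_k$ is transversal if the caps $S_j=\{(\xi,|\xi|^2):\xi\in Q_j\}$ of the paraboloid are transversal: there is $c>0$ with $|v_1\wedge\dots\wedge v_k|\ge c$ for all choices of unit normal vectors $v_j$ to $S_j$. Let $\pi_l$ denote the projection onto the $l$-th coordinate axis $e_l$. A collection $\{Q_1,\dots,Q_k\}$ is weakly transversal with pivot $Q_j$ if there are $k-1$ distinct indices $i_1,\dots,i_{k-1}$ and an enumeration $l_1,\dots,l_{k-1}$ of $\{1,\dots,k\}\setminus\{j\}$ such that $\overline{\pi_{i_s}(Q_j)}\cap\overline{\pi_{i_s}(Q_{l_s})}=\emptyset$ for $s=1,\dots,k-1$. The collection is weakly transversal if it is weakly transversal with pivot $Q_j$ for every $1\le j\le k$. *)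

theory Defs
  imports "HOL-Analysis.Analysis"
begin

text \<open>A "cube": a nondegenerate closed rectangular box in R^d (sides need not be equal).\<close>
definition is_cube :: "(real^'d) set \<Rightarrow> bool" where
  "is_cube Q \<longleftrightarrow> (\<exists>a b. (\<forall>i. a$i < b$i) \<and> Q = cbox a b)"

definition cube_partition :: "(real^'d) set set \<Rightarrow> (real^'d) set \<Rightarrow> bool" where
  "cube_partition P Q \<longleftrightarrow> finite P \<and> (\<forall>R\<in>P. is_cube R) \<and> \<Union>P = Q \<and>
     (\<forall>R1\<in>P. \<forall>R2\<in>P. R1 \<noteq> R2 \<longrightarrow> interior R1 \<inter> interior R2 = {})"

text \<open>R^{d+1} is modelled as real^'d \<times> real. The paraboloid point over xi is (xi, |xi|^2);
  its tangent space is {(h, 2 xi.h)}. A unit normal is a unit vector orthogonal to it.\<close>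
definition unit_normal_paraboloid :: "(real^'d) \<Rightarrow> ((real^'d) \<times> real) \<Rightarrow> bool" where
  "unit_normal_paraboloid xi v \<longleftrightarrow> norm v = 1 \<and> (\<forall>h. v \<bullet> (h, 2 * (xi \<bullet> h)) = 0)"

definition wedge_norm :: "('k::finite \<Rightarrow> 'v::real_inner) \<Rightarrow> real" where
  "wedge_norm v = sqrt (det (\<chi> i j. v i \<bullet> v j))"

definition transversal :: "('k::finite \<Rightarrow> (real^'d) set) \<Rightarrow> bool" where
  "transversal Q \<longleftrightarrow> (\<exists>c>0. \<forall>xi v. (\<forall>j. xi j \<in> Q j \<and> unit_normal_paraboloid (xi j) (v j))
      \<longrightarrow> wedge_norm v \<ge> c)"

definition coord_proj :: "'d \<Rightarrow> (real^'d) set \<Rightarrow> real set" where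
  "coord_proj i Q = (\<lambda>x. x $ i) ` Q"

definition weakly_transversal_pivot :: "('k::finite \<Rightarrow> (real^'d) set) \<Rightarrow> 'k \<Rightarrow> bool" where
  "weakly_transversal_pivot Q j \<longleftrightarrow> (\<exists>\<sigma>::'k \<Rightarrow> 'd. inj_on \<sigma> (UNIV - {j}) \<and>
     (\<forall>l. l \<noteq> j \<longrightarrow> closure (coord_proj (\<sigma> l) (Q j)) \<inter> closure (coord_proj (\<sigma> l) (Q l)) = {}))"

definition weakly_transversal :: "('k::finite \<Rightarrow> (real^'d) set) \<Rightarrow> bool" where
  "weakly_transversal Q \<longleftrightarrow> (\<forall>j. weakly_transversal_pivot Q j)"

end

theory Submission
  imports Defs
begin

text \<open>Fix points \<open>\<xi>\<^sub>l \<in> Q\<^sub>l\<close>. The unit normals to the paraboloid at them are multiples of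
  \<open>(-2\<xi>\<^sub>l, 1)\<close>, so transversality (a nonzero Gram determinant) makes these lifts linearly
  independent; equivalently, for every pivot \<open>j\<close> the differences \<open>\<xi>\<^sub>l - \<xi>\<^sub>j\<close> (\<open>l \<noteq> j\<close>) are
  linearly independent. An independent family has a nonzero entry in each vector along an injective
  choice of coordinates \<open>\<sigma>\<close> (a nonzero term of a maximal minor), so \<open>\<xi>\<^sub>l\<close> and \<open>\<xi>\<^sub>j\<close> differ in
  coordinate \<open>\<sigma>(l)\<close>. This separation is an open condition, so by compactness of the product of
  the cubes it holds with a uniform margin \<open>\<delta> > 0\<close>. Cutting every cube into boxes of diameter
  \<open>< \<delta>/2\<close> then works: pick a point in each selected box; these points are \<open>\<delta>\<close>-separated in
  the coordinates \<open>\<sigma>(l)\<close>, and each box projects into the \<open>\<delta>/2\<close>-neighbourhood of its point.\<close>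

text \<open>Linear independence of an indexed family: unlike \<^term>\<open>independent (w ` S)\<close>,
  a family with a repeated vector is dependent.\<close>

definition independent_family :: "'a set \<Rightarrow> ('a \<Rightarrow> 'v::real_vector) \<Rightarrow> bool" where
  "independent_family S w \<longleftrightarrow> (\<forall>c. (\<Sum>l\<in>S. c l *\<^sub>R w l) = 0 \<longrightarrow> (\<forall>l\<in>S. c l = 0))"

lemma independent_family_subset:
  assumes "independent_family T w" "S \<subseteq> T" "finite T"
  shows "independent_family S w"
  unfolding independent_family_def
proof (intro allI impI ballI)
  fix c l assume c: "(\<Sum>l\<in>S. c l *\<^sub>R w l) = 0" and "l \<in> S"
  have "(\<Sum>l\<in>T. (if l \<in> S then c l else 0) *\<^sub>R w l) = (\<Sum>l\<in>T \<inter> S. c l *\<^sub>R w l)"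
    using assms(3) by (simp add: if_smult sum.inter_restrict cong: if_cong)
  also have "\<dots> = 0"
    using assms(2) c by (simp add: Int_absorb1)
  finally show "c l = 0"
    using assms(1) \<open>l \<in> S\<close> assms(2) unfolding independent_family_def by fastforce
qed

lemma independent_family_scaleR:
  assumes "independent_family S (\<lambda>l. t l *\<^sub>R w l)" "\<forall>l\<in>S. t l \<noteq> 0"
  shows "independent_family S w"
  unfolding independent_family_def
proof (intro allI impI ballI)
  fix c l assume c: "(\<Sum>l\<in>S. c l *\<^sub>R w l) = 0" and "l \<in> S"
  have "(\<Sum>l\<in>S. (c l / t l) *\<^sub>R (t l *\<^sub>R w l)) = (\<Sum>l\<in>S. c l *\<^sub>R w l)"
    using assms(2) by (intro sum.cong) auto
  with c have "(\<Sum>l\<in>S. (c l / t l) *\<^sub>R (t l *\<^sub>R w l)) = 0"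
    by simp
  from assms(1)[unfolded independent_family_def, rule_format, OF this \<open>l \<in> S\<close>]
  have "c l / t l = 0" .
  then show "c l = 0"
    using assms(2) \<open>l \<in> S\<close> by simp
qed

lemma independent_family_not_combination:
  assumes "independent_family (insert a S) w" "a \<notin> S" "finite S"
  shows "w a \<noteq> (\<Sum>l\<in>S. d l *\<^sub>R w l)"
proof
  assume wa: "w a = (\<Sum>l\<in>S. d l *\<^sub>R w l)"
  have "(\<Sum>l\<in>S. (d(a := -1)) l *\<^sub>R w l) = (\<Sum>l\<in>S. d l *\<^sub>R w l)"
    using assms(2) by (intro sum.cong) auto
  then have "(\<Sum>l\<in>insert a S. (d(a := -1)) l *\<^sub>R w l) = 0"
    using assms(2,3) wa by simp
  then have "(d(a := -1)) a = 0"
    using assms(1) unfolding independent_family_def by blast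
  then show False
    by simp
qed

lemma axis_combination_if_zeroed_dependent:
  fixes w :: "'k \<Rightarrow> real^'d"
  assumes "independent_family S w"
    and "\<not> independent_family S (\<lambda>l. w l - (w l $ i) *\<^sub>R axis i 1)"
  shows "\<exists>d. axis i 1 = (\<Sum>l\<in>S. d l *\<^sub>R w l)"
proof -
  obtain c l0 where c: "(\<Sum>l\<in>S. c l *\<^sub>R (w l - (w l $ i) *\<^sub>R axis i 1)) = 0" and "l0 \<in> S" "c l0 \<noteq> 0"
    using assms(2) unfolding independent_family_def by blast
  define s where "s = (\<Sum>l\<in>S. c l * w l $ i)"
  have comb: "(\<Sum>l\<in>S. c l *\<^sub>R w l) = s *\<^sub>R axis i 1"
    using c by (simp add: s_def scaleR_diff_right sum_subtractf scaleR_sum_left)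
  have "s \<noteq> 0"
    using assms(1) comb \<open>l0 \<in> S\<close> \<open>c l0 \<noteq> 0\<close> unfolding independent_family_def by auto
  have "(\<Sum>l\<in>S. (c l / s) *\<^sub>R w l) = (1 / s) *\<^sub>R (\<Sum>l\<in>S. c l *\<^sub>R w l)"
    by (simp add: scaleR_sum_right)
  then have "axis i 1 = (\<Sum>l\<in>S. (c l / s) *\<^sub>R w l)"
    using comb \<open>s \<noteq> 0\<close> by simp
  then show ?thesis
    by (intro exI[of _ "\<lambda>l. c l / s"])
qed

lemma independent_family_choose_coordinate:
  fixes w :: "'k \<Rightarrow> real^'d"
  assumes "independent_family (insert a S) w" "a \<notin> S" "finite S"
  shows "\<exists>i. w a $ i \<noteq> 0 \<and> independent_family S (\<lambda>l. w l - (w l $ i) *\<^sub>R axis i 1)"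
proof (rule ccontr)
  assume "\<not> ?thesis"
  moreover have "independent_family S w"
    using assms by (blast intro: independent_family_subset)
  ultimately have "\<forall>i. \<exists>d. w a $ i \<noteq> 0 \<longrightarrow> axis i 1 = (\<Sum>l\<in>S. d l *\<^sub>R w l)"
    using axis_combination_if_zeroed_dependent by blast
  then obtain d where d: "\<And>i. w a $ i \<noteq> 0 \<Longrightarrow> axis i 1 = (\<Sum>l\<in>S. d i l *\<^sub>R w l)"
    by metis
  have "w a = (\<Sum>i\<in>UNIV. w a $ i *\<^sub>R axis i 1)"
    using basis_expansion[of "w a"] by (simp add: scalar_mult_eq_scaleR)
  also have "\<dots> = (\<Sum>i\<in>UNIV. w a $ i *\<^sub>R (\<Sum>l\<in>S. d i l *\<^sub>R w l))"
    using d by (intro sum.cong) auto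
  also have "\<dots> = (\<Sum>l\<in>S. (\<Sum>i\<in>UNIV. w a $ i * d i l) *\<^sub>R w l)"
    by (simp add: scaleR_sum_right scaleR_sum_left sum.swap[of _ UNIV])
  finally show False
    using independent_family_not_combination[OF assms, of "\<lambda>l. \<Sum>i\<in>UNIV. w a $ i * d i l"] by blast
qed

lemma independent_family_matching:
  fixes w :: "'k \<Rightarrow> real^'d"
  assumes "finite S" "independent_family S w"
  shows "\<exists>\<sigma>. inj_on \<sigma> S \<and> (\<forall>l\<in>S. w l $ \<sigma> l \<noteq> 0)"
  using assms
proof (induction S arbitrary: w rule: finite_induct)
  case empty
  then show ?case by simp
next
  case (insert a S)
  obtain i where i: "w a $ i \<noteq> 0" "independent_family S (\<lambda>l. w l - (w l $ i) *\<^sub>R axis i 1)"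
    using independent_family_choose_coordinate[OF insert.prems insert.hyps(2,1)] by blast
  obtain \<sigma> where \<sigma>: "inj_on \<sigma> S" "\<forall>l\<in>S. (w l - (w l $ i) *\<^sub>R axis i 1) $ \<sigma> l \<noteq> 0"
    using insert.IH[OF i(2)] by blast
  have "\<sigma> l \<noteq> i \<and> w l $ \<sigma> l \<noteq> 0" if "l \<in> S" for l
    using \<sigma>(2) that by (auto simp: axis_def split: if_splits)
  then show ?case
    using \<sigma>(1) i(1) insert.hyps(2) by (intro exI[of _ "\<sigma>(a := i)"]) (auto simp: inj_on_def)
qed

lemma independent_family_if_gram_det_nonzero:
  fixes v :: "'k::finite \<Rightarrow> 'v::real_inner"
  assumes "det (\<chi> i j. v i \<bullet> v j) \<noteq> 0"
  shows "independent_family UNIV v"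
  unfolding independent_family_def
proof (intro allI impI ballI)
  fix c l assume c: "(\<Sum>l\<in>UNIV. c l *\<^sub>R v l) = 0"
  define G where "G = (\<chi> i j. v i \<bullet> v j)"
  have "(G *v (\<chi> l. c l)) $ i = v i \<bullet> (\<Sum>l\<in>UNIV. c l *\<^sub>R v l)" for i
    unfolding G_def matrix_vector_mult_def by (simp add: inner_sum_right mult.commute)
  then have "G *v (\<chi> l. c l) = 0"
    using c by (simp add: vec_eq_iff)
  moreover obtain G' where "G' ** G = mat 1"
    using assms invertible_det_nz unfolding G_def invertible_def by blast
  ultimately have "(\<chi> l. c l) = 0"
    by (metis matrix_vector_mul_assoc matrix_vector_mul_lid matrix_vector_mult_0_right)
  then show "c l = 0"
    by (simp add: vec_eq_iff)
qed

lemma unit_normal_paraboloid_explicit: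
  "unit_normal_paraboloid xi ((1 / sqrt (1 + 4 * (norm xi)\<^sup>2)) *\<^sub>R (-2 *\<^sub>R xi, 1))"
proof -
  have "norm (-2 *\<^sub>R xi, 1::real) = sqrt (1 + 4 * (norm xi)\<^sup>2)"
    by (simp add: norm_Pair power_mult_distrib)
  moreover have "sqrt (1 + 4 * (norm xi)\<^sup>2) > 0"
    by (simp add: add_pos_nonneg)
  ultimately have "norm ((1 / sqrt (1 + 4 * (norm xi)\<^sup>2)) *\<^sub>R (-2 *\<^sub>R xi, 1::real)) = 1"
    by (simp only: norm_scaleR) simp
  then show ?thesis
    unfolding unit_normal_paraboloid_def by (simp add: algebra_simps)
qed

lemma independent_family_differences_if_lifted:
  fixes p :: "'k::finite \<Rightarrow> 'a::real_vector"
  assumes "independent_family UNIV (\<lambda>l. (p l, 1::real))"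
  shows "independent_family (UNIV - {j}) (\<lambda>l. p l - p j)"
  unfolding independent_family_def
proof (intro allI impI ballI)
  fix c l
  assume c: "(\<Sum>l\<in>UNIV - {j}. c l *\<^sub>R (p l - p j)) = 0" and l: "l \<in> UNIV - {j}"
  define b where "b = c(j := - (\<Sum>l\<in>UNIV - {j}. c l))"
  have "(\<Sum>l\<in>UNIV. b l *\<^sub>R (p l, 1::real)) =
      b j *\<^sub>R (p j, 1) + (\<Sum>l\<in>UNIV - {j}. b l *\<^sub>R (p l, 1))"
    by (rule sum.remove) auto
  also have "(\<Sum>l\<in>UNIV - {j}. b l *\<^sub>R (p l, 1::real)) = (\<Sum>l\<in>UNIV - {j}. c l *\<^sub>R (p l, 1))"
    by (intro sum.cong) (auto simp: b_def)
  also have "b j *\<^sub>R (p j, 1) + \<dots> = ((\<Sum>l\<in>UNIV - {j}. c l *\<^sub>R (p l - p j)), 0)"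
    by (simp add: b_def prod_eq_iff fst_sum snd_sum scaleR_diff_right sum_subtractf
        scaleR_sum_left)
  finally have "(\<Sum>l\<in>UNIV. b l *\<^sub>R (p l, 1::real)) = 0"
    using c by (simp add: zero_prod_def)
  then have "b l = 0"
    using assms unfolding independent_family_def by blast
  then show "c l = 0"
    using l by (simp add: b_def)
qed

lemma transversal_differences_independent:
  fixes Q :: "'k::finite \<Rightarrow> (real^'d) set"
  assumes "transversal Q" "\<forall>l. p l \<in> Q l"
  shows "independent_family (UNIV - {j}) (\<lambda>l. p l - p j)"
proof -
  define t where "t l = 1 / sqrt (1 + 4 * (norm (p l))\<^sup>2)" for l
  define n where "n l = t l *\<^sub>R (-2 *\<^sub>R p l, 1::real)" for l
  have "unit_normal_paraboloid (p l) (n l)" for l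
    unfolding n_def t_def by (rule unit_normal_paraboloid_explicit)
  then obtain e where "e > 0" "e \<le> wedge_norm n"
    using assms unfolding transversal_def by blast
  then have "det (\<chi> i j. n i \<bullet> n j) \<noteq> 0"
    unfolding wedge_norm_def by auto
  then have "independent_family UNIV (\<lambda>l. t l *\<^sub>R (-2 *\<^sub>R p l, 1::real))"
    unfolding n_def[abs_def] by (rule independent_family_if_gram_det_nonzero)
  moreover have "t l \<noteq> 0" for l
    using add_pos_nonneg[of 1 "4 * (norm (p l))\<^sup>2"] unfolding t_def by simp
  ultimately have "independent_family UNIV (\<lambda>l. (-2 *\<^sub>R p l, 1::real))"
    by (blast intro: independent_family_scaleR)
  then have "independent_family (UNIV - {j}) (\<lambda>l. (-2) *\<^sub>R (p l - p j))"
    using independent_family_differences_if_lifted by (fastforce simp: scaleR_diff_right)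
  then show ?thesis
    by (rule independent_family_scaleR) simp
qed

definition pivot_separated :: "real \<Rightarrow> (real^'d)^'k \<Rightarrow> bool" where
  "pivot_separated e x \<longleftrightarrow> (\<forall>j. \<exists>\<sigma>. inj_on \<sigma> (UNIV - {j}) \<and>
     (\<forall>l\<in>UNIV - {j}. e < \<bar>x $ l $ \<sigma> l - x $ j $ \<sigma> l\<bar>))"

lemma pivot_separated_mono:
  assumes "pivot_separated e x" "e' \<le> e"
  shows "pivot_separated e' x"
  using assms unfolding pivot_separated_def by (meson order.strict_trans1)

lemma open_pivot_separated: "open {x :: (real^'d)^'k::finite. pivot_separated e x}"
proof -
  have "{x :: (real^'d)^'k. pivot_separated e x} = (\<Inter>j. \<Union>\<sigma>\<in>{\<sigma>. inj_on \<sigma> (UNIV - {j})}.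
      \<Inter>l\<in>UNIV - {j}. {x. e < \<bar>x $ l $ \<sigma> l - x $ j $ \<sigma> l\<bar>})"
    unfolding pivot_separated_def by auto
  moreover have "open {x :: (real^'d)^'k. e < \<bar>x $ l $ i - x $ j $ i\<bar>}" for l j i
    by (intro open_Collect_less continuous_intros)
  ultimately show ?thesis
    by (auto intro!: open_INT open_UN)
qed

lemma pivot_separated_if_differences_independent:
  fixes x :: "(real^'d)^'k::finite"
  assumes "\<And>j. independent_family (UNIV - {j}) (\<lambda>l. x $ l - x $ j)"
  shows "\<exists>e>0. pivot_separated e x"
proof -
  obtain \<sigma> where \<sigma>: "\<And>j. inj_on (\<sigma> j) (UNIV - {j})"
    "\<And>j l. l \<in> UNIV - {j} \<Longrightarrow> (x $ l - x $ j) $ \<sigma> j l \<noteq> 0"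
    using independent_family_matching[OF _ assms] by (metis finite)
  define gaps where "gaps = (\<lambda>(j, l). \<bar>x $ l $ \<sigma> j l - x $ j $ \<sigma> j l\<bar>) ` {(j, l). l \<noteq> j}"
  define e where "e = Min (insert 1 gaps) / 2"
  have "finite gaps" "\<forall>g\<in>gaps. 0 < g"
    using \<sigma>(2) by (auto simp: gaps_def)
  then have "0 < e" "\<forall>g\<in>gaps. e < g"
    unfolding e_def by (auto intro: order.strict_trans1[OF Min_le, of "insert 1 gaps"])
  then show ?thesis
    using \<sigma>(1) unfolding pivot_separated_def gaps_def by fastforce
qed

lemma compact_vector_box:
  fixes S :: "'i::finite \<Rightarrow> 'a::{real_normed_vector, heine_borel} set"
  assumes "\<And>i. compact (S i)"
  shows "compact {x. \<forall>i. x $ i \<in> S i}"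
proof -
  have "\<forall>i. \<exists>b. \<forall>y\<in>S i. norm y \<le> b"
    using assms compact_imp_bounded bounded_iff by blast
  then obtain B where B: "\<And>i y. y \<in> S i \<Longrightarrow> norm y \<le> B i"
    by metis
  have "norm x \<le> (\<Sum>i\<in>UNIV. B i)" if "\<forall>i. x $ i \<in> S i" for x :: "'a^'i"
  proof -
    have "norm x \<le> (\<Sum>i\<in>UNIV. norm (x $ i))"
      unfolding norm_vec_def by (rule L2_set_le_sum) simp
    also have "\<dots> \<le> (\<Sum>i\<in>UNIV. B i)"
      using B that by (intro sum_mono) blast
    finally show ?thesis .
  qed
  then have "bounded {x. \<forall>i. x $ i \<in> S i}"
    unfolding bounded_iff by blast
  moreover have "closed {x. \<forall>i. x $ i \<in> S i}"
    using assms by (simp add: closed_vector_box compact_imp_closed)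
  ultimately show ?thesis
    by (simp add: compact_eq_bounded_closed)
qed

lemma compact_uniform_margin:
  fixes P :: "real \<Rightarrow> 'a::topological_space \<Rightarrow> bool"
  assumes "compact K"
    and "\<And>e. 0 < e \<Longrightarrow> open {x. P e x}"
    and "\<And>e e' x. P e x \<Longrightarrow> e' \<le> e \<Longrightarrow> P e' x"
    and "\<And>x. x \<in> K \<Longrightarrow> \<exists>e>0. P e x"
  shows "\<exists>e>0. \<forall>x\<in>K. P e x"
proof -
  have "K \<subseteq> (\<Union>e\<in>{0<..}. {x. P e x})"
    using assms(4) by auto
  then obtain C where C: "C \<subseteq> {0<..}" "finite C" "K \<subseteq> (\<Union>e\<in>C. {x. P e x})"
    using compactE_image[OF assms(1)] assms(2) by (metis greaterThan_iff)
  define e where "e = Min (insert 1 C)"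
  have "0 < e"
    using C(1,2) unfolding e_def by auto
  moreover have "P e x" if x: "x \<in> K" for x
  proof -
    obtain c where "c \<in> C" "P c x"
      using C(3) x by blast
    moreover have "e \<le> c"
      using C(2) \<open>c \<in> C\<close> unfolding e_def by simp
    ultimately show ?thesis
      using assms(3) by blast
  qed
  ultimately show ?thesis
    by blast
qed

lemma transversal_uniformly_pivot_separated:
  fixes Q :: "'k::finite \<Rightarrow> (real^'d) set"
  assumes "\<And>l. is_cube (Q l)" "transversal Q"
  shows "\<exists>\<delta>>0. \<forall>x. (\<forall>l. x $ l \<in> Q l) \<longrightarrow> pivot_separated \<delta> x"
proof -
  let ?K = "{x :: (real^'d)^'k. \<forall>l. x $ l \<in> Q l}"
  have "\<exists>\<delta>>0. \<forall>x\<in>?K. pivot_separated \<delta> x"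
  proof (rule compact_uniform_margin)
    show "compact ?K"
      using assms(1) by (intro compact_vector_box) (metis is_cube_def compact_cbox)
    show "open {x. pivot_separated e x}" for e :: real
      by (rule open_pivot_separated)
    show "pivot_separated e' x" if "pivot_separated e x" "e' \<le> e" for e e' x
      using that by (rule pivot_separated_mono)
    show "\<exists>e>0. pivot_separated e x" if "x \<in> ?K" for x
      using transversal_differences_independent[OF assms(2)] that
      by (intro pivot_separated_if_differences_independent) simp
  qed
  then show ?thesis
    by simp
qed

lemma cube_partition_cube: "cube_partition P Q \<Longrightarrow> R \<in> P \<Longrightarrow> is_cube R"
  by (simp add: cube_partition_def)

lemma cube_partition_subset: "cube_partition P Q \<Longrightarrow> R \<in> P \<Longrightarrow> R \<subseteq> Q"
  by (auto simp: cube_partition_def)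

lemma is_cube_nonempty: "is_cube Q \<Longrightarrow> Q \<noteq> {}"
  using interval_ne_empty_cart(1) unfolding is_cube_def by (metis less_imp_le)

lemma cube_partition_if_division:
  assumes "D division_of Q" "\<And>K. K \<in> D \<Longrightarrow> Henstock_Kurzweil_Integration.content K \<noteq> 0"
  shows "cube_partition D Q"
proof -
  have "is_cube K" if "K \<in> D" for K
  proof -
    obtain c d where K: "K = cbox c d"
      using assms(1) \<open>K \<in> D\<close> by blast
    then have "box c d \<noteq> {}"
      using assms(2)[OF \<open>K \<in> D\<close>] content_eq_0_interior by auto
    then show ?thesis
      unfolding is_cube_def K interval_ne_empty_cart by blast
  qed
  with division_ofD[OF assms(1)] show ?thesis
    unfolding cube_partition_def by simp
qed

text \<open>The boxes of a gauge-fine tagged division (Cousin's lemma), with the degenerate ones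
  dropped. The qualified name is needed because \<open>content\<close> alone denotes the content of a
  polynomial here.\<close>

lemma cube_partition_fine:
  fixes Q :: "(real^'d) set"
  assumes "is_cube Q" "0 < h"
  shows "\<exists>P. cube_partition P Q \<and> (\<forall>R\<in>P. \<forall>x\<in>R. \<forall>y\<in>R. dist x y < h)"
proof -
  obtain a b where ab: "\<forall>i. a $ i < b $ i" "Q = cbox a b"
    using assms(1) unfolding is_cube_def by blast
  have "gauge (\<lambda>x. ball x (h / 2))"
    using assms(2) by (simp add: gauge_ball)
  then obtain p where p: "p tagged_division_of Q" "(\<lambda>x. ball x (h / 2)) fine p"
    unfolding ab(2) by (rule fine_division_exists)
  define P where "P = {K \<in> snd ` p. Henstock_Kurzweil_Integration.content K \<noteq> 0}"
  have "Henstock_Kurzweil_Integration.content Q \<noteq> 0"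
    using ab by (simp add: content_eq_0_interior interval_eq_empty_cart not_le)
  then have "P division_of Q"
    using division_of_nontrivial[OF division_of_tagged_division[OF p(1)[unfolded ab(2)]]] ab(2)
    unfolding P_def by simp
  then have "cube_partition P Q"
    by (rule cube_partition_if_division) (simp add: P_def)
  moreover have "dist x y < h" if "R \<in> P" "x \<in> R" "y \<in> R" for R x y
  proof -
    obtain t where "R \<subseteq> ball t (h / 2)"
      using p(2) \<open>R \<in> P\<close> unfolding P_def fine_def by auto
    then have "dist x t < h / 2" "dist y t < h / 2"
      using \<open>x \<in> R\<close> \<open>y \<in> R\<close> by (auto simp: dist_commute)
    then show ?thesis
      by (rule dist_triangle_half_l)
  qed
  ultimately show ?thesis
    by blast
qed

lemma closure_coord_proj_subset_cball:
  assumes "R \<subseteq> cball p r"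
  shows "closure (coord_proj i R) \<subseteq> cball (p $ i) r"
proof (rule closure_minimal)
  show "coord_proj i R \<subseteq> cball (p $ i) r"
  proof
    fix z assume "z \<in> coord_proj i R"
    then obtain y where "y \<in> R" "z = y $ i"
      unfolding coord_proj_def by blast
    then show "z \<in> cball (p $ i) r"
      using assms dist_vec_nth_le[of p i y] by auto
  qed
qed simp

lemma weakly_transversal_if_pivot_separated:
  fixes R :: "'k::finite \<Rightarrow> (real^'d) set"
  assumes "\<And>l. R l \<subseteq> cball (p l) r" "pivot_separated (2 * r) (\<chi> l. p l)"
  shows "weakly_transversal R"
  unfolding weakly_transversal_def weakly_transversal_pivot_def
proof
  fix j
  have "\<exists>\<sigma>. inj_on \<sigma> (UNIV - {j}) \<and> (\<forall>l\<in>UNIV - {j}. 2 * r < \<bar>p l $ \<sigma> l - p j $ \<sigma> l\<bar>)"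
    using assms(2) unfolding pivot_separated_def by simp
  then obtain \<sigma> where \<sigma>: "inj_on \<sigma> (UNIV - {j})"
    "\<forall>l\<in>UNIV - {j}. 2 * r < \<bar>p l $ \<sigma> l - p j $ \<sigma> l\<bar>"
    by blast
  have "closure (coord_proj (\<sigma> l) (R j)) \<inter> closure (coord_proj (\<sigma> l) (R l)) = {}"
    if "l \<noteq> j" for l
  proof -
    have "2 * r < \<bar>p l $ \<sigma> l - p j $ \<sigma> l\<bar>"
      using \<sigma>(2) that by blast
    then have "cball (p j $ \<sigma> l) r \<inter> cball (p l $ \<sigma> l) r = {}"
      by (intro disjoint_cballI) (simp add: dist_real_def abs_minus_commute)
    then show ?thesis
      using closure_coord_proj_subset_cball[OF assms(1)] by blast
  qed
  with \<sigma>(1) show "\<exists>\<sigma>. inj_on \<sigma> (UNIV - {j}) \<and> (\<forall>l. l \<noteq> j \<longrightarrow>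
      closure (coord_proj (\<sigma> l) (R j)) \<inter> closure (coord_proj (\<sigma> l) (R l)) = {})"
    by blast
qed

lemma weakly_transversal_if_small_cubes:
  fixes R :: "'k::finite \<Rightarrow> (real^'d) set"
  assumes "\<And>l. is_cube (R l)" "\<And>l. \<forall>x\<in>R l. \<forall>y\<in>R l. dist x y < r"
    and "\<And>x. \<forall>l. x $ l \<in> R l \<Longrightarrow> pivot_separated (2 * r) x"
  shows "weakly_transversal R"
proof -
  have "\<forall>l. \<exists>x. x \<in> R l"
    using assms(1) is_cube_nonempty by blast
  from choice[OF this] obtain p where p: "\<forall>l. p l \<in> R l"
    by blast
  have "R l \<subseteq> cball (p l) r" for l
    using assms(2)[of l] p by (auto simp: less_imp_le)
  moreover have "pivot_separated (2 * r) (\<chi> l. p l)"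
    using assms(3) p by simp
  ultimately show ?thesis
    by (rule weakly_transversal_if_pivot_separated)
qed

theorem claim3p4:
  fixes Q :: "'k::finite \<Rightarrow> (real^'d) set"
  assumes "2 \<le> CARD('k)" and "CARD('k) \<le> CARD('d) + 1"
    and "\<forall>l. is_cube (Q l)"
    and "transversal Q"
  shows "\<exists>P :: 'k \<Rightarrow> (real^'d) set set. (\<forall>l. cube_partition (P l) (Q l)) \<and>
           (\<forall>Qt. (\<forall>l. Qt l \<in> P l) \<longrightarrow> weakly_transversal Qt)"
proof -
  obtain \<delta> where \<delta>: "\<delta> > 0" "\<And>x. \<forall>l. x $ l \<in> Q l \<Longrightarrow> pivot_separated \<delta> x"
    using transversal_uniformly_pivot_separated assms(3,4) by blast
  have "\<forall>l. \<exists>P. cube_partition P (Q l) \<and> (\<forall>R\<in>P. \<forall>x\<in>R. \<forall>y\<in>R. dist x y < \<delta> / 2)"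
    using cube_partition_fine[OF _ half_gt_zero[OF \<delta>(1)]] assms(3) by blast
  from choice[OF this] obtain P where P: "\<forall>l. cube_partition (P l) (Q l) \<and>
      (\<forall>R\<in>P l. \<forall>x\<in>R. \<forall>y\<in>R. dist x y < \<delta> / 2)"
    by blast
  have "weakly_transversal Qt" if Qt: "\<forall>l. Qt l \<in> P l" for Qt
  proof (rule weakly_transversal_if_small_cubes)
    show "is_cube (Qt l)" and "\<forall>x\<in>Qt l. \<forall>y\<in>Qt l. dist x y < \<delta> / 2" for l
      using P cube_partition_cube Qt by blast+
    show "pivot_separated (2 * (\<delta> / 2)) x" if "\<forall>l. x $ l \<in> Qt l" for x
      using \<delta>(2)[of x] that P cube_partition_subset Qt by fastforce
  qed
  with P show ?thesis
    by blast
qed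

end
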